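(* In the FAVANO process, assume each $\nabla f_i$ is $L$-Lipschitz and the stochastic gradients have bounded variance $\sigma^2$, and assume $\eta<\frac{1}{4LK^2}$. Then for every client $i$, every time step $t\ge0$ and every local step $q\in\{1,\dots,K\}$, $$\mathbb{E}\|h^i_{t+1,q}\|^2\le B^i_t:=\frac{\sigma^2}{K^2}+16L^2\,\mathbb{E}\|w^i_t-\mu_t\|^2+8\,\mathbb{E}\|\nabla f_i(\mu_t)\|^2 .$$
   Context: FAVANO process. Fix integers $n\ge1$, $1\le s\le n$, $K\ge1$, $d\ge1$, a step size $\eta>0$ and differentiable $f_1,\dots,f_n:\mathbb{R}^d\to\mathbb{R}$, $f=\frac1n\sum_i f_i$. All random variables live on one probability space. For each client $i$ a stochastic gradient oracle returns, at a query point $x$, $\widetilde g^i(x)=\nabla f_i(x)+\xi$ where, conditionally on everything generated before the query (including $x$), $\xi$ has mean zero (each query uses fresh noise). Initialize $w_0\in\mathbb{R}^d$ deterministic and $w_0^i=w_0$ for all $i$. For each $t\ge1$, each client $i$ and each $q\ge1$ define recursively $\widetilde h^i_{t,q}=\widetilde g^i\big(w^i_{t-1}-\eta\sum_{r=1}^{q-1}\widetilde h^i_{t,r}\big)$ and $h^i_{t,q}=\nabla f_i\big(w^i_{t-1}-\eta\sum_{r=1}^{q-1}\widetilde h^i_{t,r}\big)$. At each $t\ge1$ there are random integers $E^1_t,\dots,E^n_t\ge0$ with $\mathbf{P}(E^i_t>0)>0$, and a random subset $\mathcal{S}_t\subseteq\{1,\dots,n\}$ uniformly distributed among subsets of size $s$;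 the family $(\mathcal S_t,E^1_t,\dots,E^n_t)$ is independent of all the other randomness (the past up to time $t-1$ and all $\widetilde h^i_{t,q}$), and $\mathcal S_t$ is independent of $(E^i_t)_i$. The weight $\alpha^i_t$ is either $\mathbf{P}(E^i_t>0)\,(E^i_t\wedge K)$ (stochastic version) or $\mathbb{E}[E^i_t\wedge K]$ (deterministic version), where $a\wedge b=\min(a,b)$. Set $\check h^i_t=\frac{1}{\alpha^i_t}\sum_{q=1}^{E^i_t\wedge K}\widetilde h^i_{t,q}$ if $E^i_t>0$ and $\check h^i_t=0$ otherwise. Updates: $w_t=\frac{1}{s+1}\big(w_{t-1}+\sum_{i\in\mathcal S_t}(w^i_{t-1}-\eta\check h^i_t)\big)$; $w^i_t=w_t$ for $i\in\mathcal S_t$ and $w^i_t=w^i_{t-1}$ for $i\notin\mathcal S_t$. Define $\mu_t=\frac{1}{n+1}\big(w_t+\sum_{i=1}^n w^i_t\big)$. All expectations appearing are assumed finite. Smoothness: $\|\nabla f_i(x)-\nabla f_i(y)\|\le L\|x-y\|$ for all $i,x,y$, with $L>0$. Bounded variance: conditionally on everything generated before a query at $x$, $\mathbb{E}\|\widetilde g^i(x)-\nabla f_i(x)\|^2\le\sigma^2$. *)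

theory Defs
  imports "HOL-Probability.Probability"
begin

text \<open>Given the client's starting point x, the gradient field g of f_i, step size eta and the
  oracle noises xi q (noise of the q-th query, q >= 1), favano_psum ... q is
  the sum of htilde_r for r = 1..q, where
  htilde_r = g (x - eta * sum_{r'<r} htilde_r') + xi r.\<close>

fun favano_psum :: "('a::real_normed_vector \<Rightarrow> 'a) \<Rightarrow> real \<Rightarrow> 'a \<Rightarrow> (nat \<Rightarrow> 'a) \<Rightarrow> nat \<Rightarrow> 'a" where
  "favano_psum g eta x xi 0 = 0"
| "favano_psum g eta x xi (Suc q) =
     favano_psum g eta x xi q + (g (x - eta *\<^sub>R favano_psum g eta x xi q) + xi (Suc q))"

definition favano_query :: "('a::real_normed_vector \<Rightarrow> 'a) \<Rightarrow> real \<Rightarrow> 'a \<Rightarrow> (nat \<Rightarrow> 'a) \<Rightarrow> nat \<Rightarrow> 'a" where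
  "favano_query g eta x xi q = x - eta *\<^sub>R favano_psum g eta x xi (q - 1)"

definition favano_htil :: "('a::real_normed_vector \<Rightarrow> 'a) \<Rightarrow> real \<Rightarrow> 'a \<Rightarrow> (nat \<Rightarrow> 'a) \<Rightarrow> nat \<Rightarrow> 'a" where
  "favano_htil g eta x xi q = g (favano_query g eta x xi q) + xi q"

definition favano_alpha :: "bool \<Rightarrow> 'm measure \<Rightarrow> (nat \<Rightarrow> nat \<Rightarrow> 'm \<Rightarrow> nat) \<Rightarrow> nat
    \<Rightarrow> nat \<Rightarrow> nat \<Rightarrow> 'm \<Rightarrow> real" where
  "favano_alpha stoch M E K t i \<omega> =
     (if stoch then measure M {\<omega>'\<in>space M. E t i \<omega>' > 0} * real (min (E t i \<omega>) K)
      else (\<integral>\<omega>'. real (min (E t i \<omega>') K) \<partial>M))"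

text \<open>State (w_t, (w^i_t)_i) of the process at time t, as a function of the outcome omega.
  grad i is the gradient of f_i, xi t i q \<omega> is the noise of the oracle answer htilde^i_{t,q},
  S t \<omega> is the sampled set S_t and E t i \<omega> is E^i_t.\<close>
fun favano_state :: "'m measure \<Rightarrow> bool \<Rightarrow> (nat \<Rightarrow> 'a::real_normed_vector \<Rightarrow> 'a) \<Rightarrow> real \<Rightarrow> nat \<Rightarrow> nat
    \<Rightarrow> 'a \<Rightarrow> (nat \<Rightarrow> nat \<Rightarrow> nat \<Rightarrow> 'm \<Rightarrow> 'a) \<Rightarrow> (nat \<Rightarrow> 'm \<Rightarrow> nat set)
    \<Rightarrow> (nat \<Rightarrow> nat \<Rightarrow> 'm \<Rightarrow> nat) \<Rightarrow> nat \<Rightarrow> 'm \<Rightarrow> 'a \<times> (nat \<Rightarrow> 'a)" where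
  "favano_state M stoch grad eta K s w0 xi S E 0 \<omega> = (w0, (\<lambda>i. w0))"
| "favano_state M stoch grad eta K s w0 xi S E (Suc t) \<omega> =
     (let (w, W) = favano_state M stoch grad eta K s w0 xi S E t \<omega>;
          hchk = (\<lambda>i. if E (Suc t) i \<omega> > 0
                      then (1 / favano_alpha stoch M E K (Suc t) i \<omega>) *\<^sub>R
                           (\<Sum>q = 1..min (E (Suc t) i \<omega>) K.
                               favano_htil (grad i) eta (W i) (\<lambda>r. xi (Suc t) i r \<omega>) q)
                      else 0);
          w' = (1 / (real s + 1)) *\<^sub>R (w + (\<Sum>i\<in>S (Suc t) \<omega>. W i - eta *\<^sub>R hchk i))
      in (w', (\<lambda>i. if i \<in> S (Suc t) \<omega> then w' else W i)))"

definition favano_mu :: "nat \<Rightarrow> 'a::real_normed_vector \<times> (nat \<Rightarrow> 'a) \<Rightarrow> 'a" where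
  "favano_mu n st = (1 / (real n + 1)) *\<^sub>R (fst st + (\<Sum>i = 1..n. snd st i))"

text \<open>Generators of the information available before the q-th query of client i in round t:
  all randomness of rounds 1..t-1 (noises of all clients and all local steps, S, E) and the
  noises of the first q-1 queries of client i in round t.\<close>
definition favano_past_events :: "'m measure \<Rightarrow> nat \<Rightarrow> (nat \<Rightarrow> nat \<Rightarrow> nat \<Rightarrow> 'm \<Rightarrow> 'a::topological_space)
    \<Rightarrow> (nat \<Rightarrow> 'm \<Rightarrow> nat set) \<Rightarrow> (nat \<Rightarrow> nat \<Rightarrow> 'm \<Rightarrow> nat) \<Rightarrow> nat \<Rightarrow> nat \<Rightarrow> nat \<Rightarrow> 'm set set" where
  "favano_past_events M n xi S E t i q =
     {xi t' j r -` B \<inter> space M | t' j r B. 1 \<le> t' \<and> t' < t \<and> j \<in> {1..n} \<and> 1 \<le> r \<and> B \<in> sets borel}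
   \<union> {S t' -` A \<inter> space M | t' A. 1 \<le> t' \<and> t' < t}
   \<union> {E t' j -` A \<inter> space M | t' j A. 1 \<le> t' \<and> t' < t \<and> j \<in> {1..n}}
   \<union> {xi t i r -` B \<inter> space M | r B. 1 \<le> r \<and> r < q \<and> B \<in> sets borel}"

text \<open>Generators of: the past up to time t-1 and all noises (hence all htilde) of round t.\<close>
definition favano_other_events :: "'m measure \<Rightarrow> nat \<Rightarrow> (nat \<Rightarrow> nat \<Rightarrow> nat \<Rightarrow> 'm \<Rightarrow> 'a::topological_space)
    \<Rightarrow> (nat \<Rightarrow> 'm \<Rightarrow> nat set) \<Rightarrow> (nat \<Rightarrow> nat \<Rightarrow> 'm \<Rightarrow> nat) \<Rightarrow> nat \<Rightarrow> 'm set set" where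
  "favano_other_events M n xi S E t =
     {xi t' j r -` B \<inter> space M | t' j r B. 1 \<le> t' \<and> t' \<le> t \<and> j \<in> {1..n} \<and> 1 \<le> r \<and> B \<in> sets borel}
   \<union> {S t' -` A \<inter> space M | t' A. 1 \<le> t' \<and> t' < t}
   \<union> {E t' j -` A \<inter> space M | t' j A. 1 \<le> t' \<and> t' < t \<and> j \<in> {1..n}}"

definition favano_S_events :: "'m measure \<Rightarrow> (nat \<Rightarrow> 'm \<Rightarrow> nat set) \<Rightarrow> nat \<Rightarrow> 'm set set" where
  "favano_S_events M S t = {S t -` A \<inter> space M | A. True}"

definition favano_E_events :: "'m measure \<Rightarrow> nat \<Rightarrow> (nat \<Rightarrow> nat \<Rightarrow> 'm \<Rightarrow> nat) \<Rightarrow> nat \<Rightarrow> 'm set set" where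
  "favano_E_events M n E t = {E t j -` A \<inter> space M | j A. j \<in> {1..n}}"

end

theory Submission
  imports Defs
begin

text \<open>The q-th query point of a round lies at distance eta |htilde_1 + ... + htilde_{q-1}| from
  the client's start w. Lipschitz continuity and (a + b)^2 \<le> 2 a^2 + 2 b^2 therefore give
  |h_q|^2 \<le> 4 L^2 |w - mu|^2 + 4 |grad f_i mu|^2 + 4 L^2 eta^2 (q - 1) sum_{r<q} (|h_r|^2 + |xi_r|^2).
  Taking expectations and inducting on q, with E |h_r|^2 \<le> B and E |xi_r|^2 \<le> sigma^2, the last
  term is at most 4 L^2 eta^2 K^2 (B + sigma^2) \<le> (B + sigma^2) / (4 K^2) because
  eta < 1 / (4 L K^2), and this closes the induction.\<close>

lemma power2_add_le_double:
  fixes a b :: real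
  shows "(a + b)\<^sup>2 \<le> 2 * a\<^sup>2 + 2 * b\<^sup>2"
proof -
  have "2 * a\<^sup>2 + 2 * b\<^sup>2 - (a + b)\<^sup>2 = (a - b)\<^sup>2" by (simp add: power2_eq_square algebra_simps)
  thus ?thesis by (metis diff_ge_0_iff_ge zero_le_power2)
qed

lemma norm_sum_squared_le:
  fixes v :: "'b \<Rightarrow> 'a::real_normed_vector"
  shows "(norm (\<Sum>i\<in>I. v i))\<^sup>2 \<le> real (card I) * (\<Sum>i\<in>I. (norm (v i))\<^sup>2)"
proof -
  have "(norm (\<Sum>i\<in>I. v i))\<^sup>2 \<le> (\<Sum>i\<in>I. norm (v i))\<^sup>2"
    by (simp add: norm_sum power_mono)
  also have "\<dots> \<le> (\<Sum>i\<in>I. (norm (v i))\<^sup>2) * real (card I)"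
    by (rule sum_squared_le_sum_of_squares)
  finally show ?thesis by (simp add: mult.commute)
qed

lemma favano_psum_eq_sum_htil:
  "favano_psum g eta x xi q = (\<Sum>r = 1..q. favano_htil g eta x xi r)"
  by (induction q) (simp_all add: favano_htil_def favano_query_def)

lemma favano_query_grad_sq_le:
  fixes g :: "'a::real_normed_vector \<Rightarrow> 'a"
  assumes lipschitz: "\<And>x y. norm (g x - g y) \<le> L * norm (x - y)"
  shows "(norm (g (favano_query g eta x xi q)))\<^sup>2
    \<le> 4 * L\<^sup>2 * (norm (x - m))\<^sup>2 + 4 * (norm (g m))\<^sup>2
      + 4 * L\<^sup>2 * eta\<^sup>2 * real (q - 1)
        * (\<Sum>r = 1..q - 1. (norm (g (favano_query g eta x xi r)))\<^sup>2 + (norm (xi r))\<^sup>2)"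
proof -
  define D where "D = favano_psum g eta x xi (q - 1)"
  define \<Sigma> where "\<Sigma> = (\<Sum>r = 1..q - 1. (norm (g (favano_query g eta x xi r)))\<^sup>2 + (norm (xi r))\<^sup>2)"
  have query: "favano_query g eta x xi q = x - eta *\<^sub>R D"
    by (simp add: favano_query_def D_def)
  have drift: "norm (g (x - eta *\<^sub>R D)) \<le> norm (g x) + L * \<bar>eta\<bar> * norm D"
    using lipschitz[of "x - eta *\<^sub>R D" x] norm_triangle_ineq2[of "g (x - eta *\<^sub>R D)" "g x"]
    by simp
  have anchor: "norm (g x) \<le> norm (g m) + L * norm (x - m)"
    using lipschitz[of x m] norm_triangle_ineq2[of "g x" "g m"] by linarith
  have "(norm D)\<^sup>2 \<le> real (q - 1) * (\<Sum>r = 1..q - 1. (norm (favano_htil g eta x xi r))\<^sup>2)"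
    unfolding D_def favano_psum_eq_sum_htil
    using norm_sum_squared_le[of "favano_htil g eta x xi" "{1..q - 1}"] by simp
  also have "\<dots> \<le> real (q - 1) * (2 * \<Sigma>)"
    unfolding \<Sigma>_def sum_distrib_left favano_htil_def
    by (intro mult_left_mono sum_mono order.trans[OF power_mono[OF norm_triangle_ineq]])
       (auto simp: power2_add_le_double)
  finally have D_sq: "(norm D)\<^sup>2 \<le> 2 * real (q - 1) * \<Sigma>" by simp
  have "(norm (g (favano_query g eta x xi q)))\<^sup>2 \<le> (norm (g x) + L * \<bar>eta\<bar> * norm D)\<^sup>2"
    unfolding query using drift by (simp add: power_mono)
  also have "\<dots> \<le> 2 * (norm (g x))\<^sup>2 + 2 * (L * \<bar>eta\<bar> * norm D)\<^sup>2"
    by (rule power2_add_le_double)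
  also have "(norm (g x))\<^sup>2 \<le> (norm (g m) + L * norm (x - m))\<^sup>2"
    using anchor by (simp add: power_mono)
  also have "\<dots> \<le> 2 * (norm (g m))\<^sup>2 + 2 * (L * norm (x - m))\<^sup>2"
    by (rule power2_add_le_double)
  also have "2 * (L * \<bar>eta\<bar> * norm D)\<^sup>2 = 2 * L\<^sup>2 * eta\<^sup>2 * (norm D)\<^sup>2"
    by (simp add: power_mult_distrib)
  also have "\<dots> \<le> 2 * L\<^sup>2 * eta\<^sup>2 * (2 * real (q - 1) * \<Sigma>)"
    using D_sq by (intro mult_left_mono) auto
  finally show ?thesis unfolding \<Sigma>_def by (simp add: power_mult_distrib mult_ac)
qed

lemma le_of_recursive_sum_bound:
  fixes H :: "nat \<Rightarrow> real"
  assumes recursive: "\<And>q. 1 \<le> q \<Longrightarrow> q \<le> K \<Longrightarrow>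
                        H q \<le> A + c * real (q - 1) * (\<Sum>r = 1..q - 1. H r + V)"
    and c_nonneg: "0 \<le> c" and BV_nonneg: "0 \<le> B + V"
    and closes: "A + c * (real K)\<^sup>2 * (B + V) \<le> B"
    and q: "1 \<le> q" "q \<le> K"
  shows "H q \<le> B"
  using q
proof (induction q rule: less_induct)
  case (less q)
  have "(\<Sum>r = 1..q - 1. H r + V) \<le> (\<Sum>r = 1..q - 1. B + V)"
    using less.IH less.prems by (intro sum_mono) auto
  also have "\<dots> = real (q - 1) * (B + V)" by simp
  finally have "c * real (q - 1) * (\<Sum>r = 1..q - 1. H r + V) \<le> c * real (q - 1) * (real (q - 1) * (B + V))"
    using c_nonneg by (intro mult_left_mono) auto
  also have "\<dots> = c * (real (q - 1))\<^sup>2 * (B + V)" by (simp add: power2_eq_square)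
  also have "\<dots> \<le> c * (real K)\<^sup>2 * (B + V)"
    using less.prems c_nonneg BV_nonneg by (intro mult_right_mono mult_left_mono power_mono) auto
  finally show ?case using recursive[OF less.prems] closes by linarith
qed

lemma favano_recursion_closes:
  fixes L eta \<sigma> D G :: real
  assumes L_pos: "0 < L" and eta_pos: "0 < eta" and eta_small: "eta < 1 / (4 * L * real K ^ 2)"
    and K_pos: "1 \<le> K" and D_nonneg: "0 \<le> D" and G_nonneg: "0 \<le> G"
  defines "B \<equiv> \<sigma>\<^sup>2 / real K ^ 2 + 16 * L\<^sup>2 * D + 8 * G"
  shows "4 * L\<^sup>2 * D + 4 * G + 4 * L\<^sup>2 * eta\<^sup>2 * (real K)\<^sup>2 * (B + \<sigma>\<^sup>2) \<le> B"
proof -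
  define k where "k = (real K)\<^sup>2"
  have k_ge1: "1 \<le> k" using K_pos by (simp add: k_def)
  have "0 < 4 * L * k" using L_pos k_ge1 by simp
  hence "4 * L * eta * k < 1"
    using eta_small by (simp add: k_def pos_less_divide_eq mult_ac)
  moreover have "0 \<le> 4 * L * eta * k" using L_pos eta_pos k_ge1 by simp
  ultimately
  have "(4 * L * eta * k)\<^sup>2 \<le> 1" by (simp add: power_le_one)
  hence contraction: "4 * L\<^sup>2 * eta\<^sup>2 * k \<le> 1 / (4 * k)"
    using k_ge1 by (simp add: field_simps power2_eq_square)
  define Q where "Q = \<sigma>\<^sup>2 / k"
  have B_nonneg: "0 \<le> B" using D_nonneg G_nonneg by (simp add: B_def)
  have "4 * L\<^sup>2 * eta\<^sup>2 * k * (B + \<sigma>\<^sup>2) \<le> (B + \<sigma>\<^sup>2) / (4 * k)"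
    using mult_right_mono[OF contraction, of "B + \<sigma>\<^sup>2"] B_nonneg by simp
  also have "\<dots> = B / (4 * k) + Q / 4" by (simp add: Q_def add_divide_distrib)
  also have "\<dots> \<le> B / 4 + Q / 4"
    using B_nonneg k_ge1 by (simp add: divide_le_eq mult_le_cancel_left1)
  finally have "4 * L\<^sup>2 * eta\<^sup>2 * k * (B + \<sigma>\<^sup>2) \<le> B / 4 + Q / 4" .
  moreover have "B = Q + 16 * (L\<^sup>2 * D) + 8 * G" by (simp add: B_def Q_def k_def)
  moreover have "0 \<le> Q" "0 \<le> L\<^sup>2 * D" using k_ge1 D_nonneg by (simp_all add: Q_def)
  ultimately have "4 * (L\<^sup>2 * D) + 4 * G + 4 * L\<^sup>2 * eta\<^sup>2 * k * (B + \<sigma>\<^sup>2) \<le> B"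
    using G_nonneg by linarith
  thus ?thesis by (simp add: k_def mult.assoc)
qed

lemma lipschitz_local_steps_grad_sq_bound:
  fixes g :: "'a::real_normed_vector \<Rightarrow> 'a" and x m :: "'m \<Rightarrow> 'a" and X :: "'m \<Rightarrow> nat \<Rightarrow> 'a"
  assumes lipschitz: "\<And>x y. norm (g x - g y) \<le> L * norm (x - y)"
    and L_pos: "0 < L" and eta_pos: "0 < eta" and eta_small: "eta < 1 / (4 * L * real K ^ 2)"
    and K_pos: "1 \<le> K"
    and int_grad: "\<And>q. 1 \<le> q \<Longrightarrow> integrable M (\<lambda>\<omega>. (norm (g (favano_query g eta (x \<omega>) (X \<omega>) q)))\<^sup>2)"
    and int_noise: "\<And>q. 1 \<le> q \<Longrightarrow> integrable M (\<lambda>\<omega>. (norm (X \<omega> q))\<^sup>2)"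
    and noise_bound: "\<And>q. 1 \<le> q \<Longrightarrow> (\<integral>\<omega>. (norm (X \<omega> q))\<^sup>2 \<partial>M) \<le> \<sigma>\<^sup>2"
    and int_dev: "integrable M (\<lambda>\<omega>. (norm (x \<omega> - m \<omega>))\<^sup>2)"
    and int_grad_m: "integrable M (\<lambda>\<omega>. (norm (g (m \<omega>)))\<^sup>2)"
    and q: "q \<in> {1..K}"
  shows "(\<integral>\<omega>. (norm (g (favano_query g eta (x \<omega>) (X \<omega>) q)))\<^sup>2 \<partial>M)
     \<le> \<sigma>\<^sup>2 / real K ^ 2 + 16 * L\<^sup>2 * (\<integral>\<omega>. (norm (x \<omega> - m \<omega>))\<^sup>2 \<partial>M)
       + 8 * (\<integral>\<omega>. (norm (g (m \<omega>)))\<^sup>2 \<partial>M)"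
proof -
  define H where "H q = (\<integral>\<omega>. (norm (g (favano_query g eta (x \<omega>) (X \<omega>) q)))\<^sup>2 \<partial>M)" for q
  define D where "D = (\<integral>\<omega>. (norm (x \<omega> - m \<omega>))\<^sup>2 \<partial>M)"
  define G where "G = (\<integral>\<omega>. (norm (g (m \<omega>)))\<^sup>2 \<partial>M)"
  define c where "c = 4 * L\<^sup>2 * eta\<^sup>2"
  have recursive: "H q \<le> 4 * L\<^sup>2 * D + 4 * G + c * real (q - 1) * (\<Sum>r = 1..q - 1. H r + \<sigma>\<^sup>2)"
    if "1 \<le> q" for q
  proof -
    define \<Sigma> where "\<Sigma> \<omega> = (\<Sum>r = 1..q - 1.
      (norm (g (favano_query g eta (x \<omega>) (X \<omega>) r)))\<^sup>2 + (norm (X \<omega> r))\<^sup>2)" for \<omega>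
    have int_\<Sigma>: "integrable M \<Sigma>"
      unfolding \<Sigma>_def using int_grad int_noise by auto
    have "H q \<le> (\<integral>\<omega>. 4 * L\<^sup>2 * (norm (x \<omega> - m \<omega>))\<^sup>2 + 4 * (norm (g (m \<omega>)))\<^sup>2
                      + c * real (q - 1) * \<Sigma> \<omega> \<partial>M)"
      unfolding H_def c_def \<Sigma>_def
      using int_grad[OF that] int_dev int_grad_m int_\<Sigma>[unfolded \<Sigma>_def]
      by (intro integral_mono favano_query_grad_sq_le[OF lipschitz]) auto
    also have "\<dots> = 4 * L\<^sup>2 * D + 4 * G + c * real (q - 1) * (\<integral>\<omega>. \<Sigma> \<omega> \<partial>M)"
      unfolding D_def G_def using int_dev int_grad_m int_\<Sigma> by simp
    also have "(\<integral>\<omega>. \<Sigma> \<omega> \<partial>M) = (\<Sum>r = 1..q - 1. H r + (\<integral>\<omega>. (norm (X \<omega> r))\<^sup>2 \<partial>M))"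
      unfolding \<Sigma>_def H_def using int_grad int_noise by (simp add: Bochner_Integration.integral_sum)
    also have "\<dots> \<le> (\<Sum>r = 1..q - 1. H r + \<sigma>\<^sup>2)"
      using noise_bound by (intro sum_mono) auto
    finally show ?thesis by (simp add: c_def mult_left_mono)
  qed
  have closes: "4 * L\<^sup>2 * D + 4 * G + c * (real K)\<^sup>2
      * (\<sigma>\<^sup>2 / real K ^ 2 + 16 * L\<^sup>2 * D + 8 * G + \<sigma>\<^sup>2) \<le> \<sigma>\<^sup>2 / real K ^ 2 + 16 * L\<^sup>2 * D + 8 * G"
    unfolding c_def D_def G_def
    by (rule favano_recursion_closes[OF L_pos eta_pos eta_small K_pos]) auto
  have "H q \<le> \<sigma>\<^sup>2 / real K ^ 2 + 16 * L\<^sup>2 * D + 8 * G"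
  proof (rule le_of_recursive_sum_bound[OF recursive _ _ closes])
    show "0 \<le> c" by (simp add: c_def)
    show "0 \<le> \<sigma>\<^sup>2 / real K ^ 2 + 16 * L\<^sup>2 * D + 8 * G + \<sigma>\<^sup>2"
      unfolding D_def G_def by (intro add_nonneg_nonneg mult_nonneg_nonneg integral_nonneg_AE) auto
  qed (use q in auto)
  thus ?thesis by (simp add: H_def D_def G_def)
qed

theorem mainTheorem5:
  fixes M :: "'m measure"
    and n s K :: nat and eta L \<sigma> :: real and stoch :: bool
    and f :: "nat \<Rightarrow> 'a::euclidean_space \<Rightarrow> real" and grad :: "nat \<Rightarrow> 'a \<Rightarrow> 'a"
    and w0 :: 'a
    and xi :: "nat \<Rightarrow> nat \<Rightarrow> nat \<Rightarrow> 'm \<Rightarrow> 'a"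
    and S :: "nat \<Rightarrow> 'm \<Rightarrow> nat set"
    and E :: "nat \<Rightarrow> nat \<Rightarrow> 'm \<Rightarrow> nat"
  assumes prob: "prob_space M"
    and n_pos: "1 \<le> n" and s_range: "1 \<le> s" "s \<le> n" and K_pos: "1 \<le> K"
    and eta_pos: "0 < eta"
    and grad_f: "\<And>i x. i \<in> {1..n} \<Longrightarrow> GDERIV (f i) x :> grad i x"
    and L_pos: "0 < L"
    and smooth: "\<And>i x y. i \<in> {1..n} \<Longrightarrow> norm (grad i x - grad i y) \<le> L * norm (x - y)"
    and eta_small: "eta < 1 / (4 * L * real K ^ 2)"
    \<comment> \<open>oracle noise: measurable, finite second moment, conditionally (on everything before the query)
        mean zero with conditional second moment at most sigma^2\<close>
    and xi_meas: "\<And>t i q. 1 \<le> t \<Longrightarrow> i \<in> {1..n} \<Longrightarrow> 1 \<le> q \<Longrightarrow> xi t i q \<in> borel_measurable M"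
    and xi_sq_int: "\<And>t i q. 1 \<le> t \<Longrightarrow> i \<in> {1..n} \<Longrightarrow> 1 \<le> q \<Longrightarrow>
                      integrable M (\<lambda>\<omega>. (norm (xi t i q \<omega>))\<^sup>2)"
    and xi_mean0: "\<And>t i q A. 1 \<le> t \<Longrightarrow> i \<in> {1..n} \<Longrightarrow> 1 \<le> q \<Longrightarrow>
                      A \<in> sigma_sets (space M) (favano_past_events M n xi S E t i q) \<Longrightarrow>
                      (LINT \<omega>:A|M. xi t i q \<omega>) = 0"
    and xi_var: "\<And>t i q A. 1 \<le> t \<Longrightarrow> i \<in> {1..n} \<Longrightarrow> 1 \<le> q \<Longrightarrow>
                      A \<in> sigma_sets (space M) (favano_past_events M n xi S E t i q) \<Longrightarrow>
                      (LINT \<omega>:A|M. (norm (xi t i q \<omega>))\<^sup>2) \<le> \<sigma>\<^sup>2 * measure M A"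
    \<comment> \<open>client sampling and numbers of local steps\<close>
    and S_meas: "\<And>t. 1 \<le> t \<Longrightarrow> S t \<in> measurable M (count_space UNIV)"
    and S_vals: "\<And>t \<omega>. 1 \<le> t \<Longrightarrow> \<omega> \<in> space M \<Longrightarrow> S t \<omega> \<subseteq> {1..n} \<and> card (S t \<omega>) = s"
    and S_unif: "\<And>t A. 1 \<le> t \<Longrightarrow> A \<subseteq> {1..n} \<Longrightarrow> card A = s \<Longrightarrow>
                   measure M {\<omega> \<in> space M. S t \<omega> = A} = 1 / real (n choose s)"
    and E_meas: "\<And>t i. 1 \<le> t \<Longrightarrow> i \<in> {1..n} \<Longrightarrow> E t i \<in> measurable M (count_space UNIV)"
    and E_pos: "\<And>t i. 1 \<le> t \<Longrightarrow> i \<in> {1..n} \<Longrightarrow> measure M {\<omega> \<in> space M. E t i \<omega> > 0} > 0"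
    and indep_round: "\<And>t. 1 \<le> t \<Longrightarrow> prob_space.indep_set M
                 (sigma_sets (space M) (favano_S_events M S t \<union> favano_E_events M n E t))
                 (sigma_sets (space M) (favano_other_events M n xi S E t))"
    and indep_S_E: "\<And>t. 1 \<le> t \<Longrightarrow> prob_space.indep_set M
                 (sigma_sets (space M) (favano_S_events M S t))
                 (sigma_sets (space M) (favano_E_events M n E t))"
    \<comment> \<open>all expectations appearing are finite\<close>
    and int_h: "\<And>t i q. i \<in> {1..n} \<Longrightarrow> 1 \<le> q \<Longrightarrow> integrable M (\<lambda>\<omega>.
                   (norm (grad i (favano_query (grad i) eta
                      (snd (favano_state M stoch grad eta K s w0 xi S E t \<omega>) i)
                      (\<lambda>r. xi (Suc t) i r \<omega>) q)))\<^sup>2)"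
    and int_dev: "\<And>t i. i \<in> {1..n} \<Longrightarrow> integrable M (\<lambda>\<omega>.
                   (norm (snd (favano_state M stoch grad eta K s w0 xi S E t \<omega>) i
                          - favano_mu n (favano_state M stoch grad eta K s w0 xi S E t \<omega>)))\<^sup>2)"
    and int_gmu: "\<And>t i. i \<in> {1..n} \<Longrightarrow> integrable M (\<lambda>\<omega>.
                   (norm (grad i (favano_mu n (favano_state M stoch grad eta K s w0 xi S E t \<omega>))))\<^sup>2)"
  shows "\<forall>i \<in> {1..n}. \<forall>t. \<forall>q \<in> {1..K}.
           (\<integral>\<omega>. (norm (grad i (favano_query (grad i) eta
                      (snd (favano_state M stoch grad eta K s w0 xi S E t \<omega>) i)
                      (\<lambda>r. xi (Suc t) i r \<omega>) q)))\<^sup>2 \<partial>M)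
         \<le> \<sigma>\<^sup>2 / real K ^ 2
           + 16 * L\<^sup>2 * (\<integral>\<omega>. (norm (snd (favano_state M stoch grad eta K s w0 xi S E t \<omega>) i
                          - favano_mu n (favano_state M stoch grad eta K s w0 xi S E t \<omega>)))\<^sup>2 \<partial>M)
           + 8 * (\<integral>\<omega>. (norm (grad i (favano_mu n (favano_state M stoch grad eta K s w0 xi S E t \<omega>))))\<^sup>2 \<partial>M)"
proof (intro ballI allI)
  fix i t q assume i: "i \<in> {1..n}" and q: "q \<in> {1..K}"
  have noise_bound: "(\<integral>\<omega>. (norm (xi (Suc t) i r \<omega>))\<^sup>2 \<partial>M) \<le> \<sigma>\<^sup>2" if r: "1 \<le> r" for r
  proof -
    have "(LINT \<omega>:space M|M. (norm (xi (Suc t) i r \<omega>))\<^sup>2) \<le> \<sigma>\<^sup>2 * measure M (space M)"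
      by (rule xi_var[OF _ i r]) (auto intro: sigma_sets_top)
    thus ?thesis
      using xi_sq_int[OF _ i r] prob_space.prob_space[OF prob] by (simp add: set_integral_space)
  qed
  show "(\<integral>\<omega>. (norm (grad i (favano_query (grad i) eta
                      (snd (favano_state M stoch grad eta K s w0 xi S E t \<omega>) i)
                      (\<lambda>r. xi (Suc t) i r \<omega>) q)))\<^sup>2 \<partial>M)
         \<le> \<sigma>\<^sup>2 / real K ^ 2
           + 16 * L\<^sup>2 * (\<integral>\<omega>. (norm (snd (favano_state M stoch grad eta K s w0 xi S E t \<omega>) i
                          - favano_mu n (favano_state M stoch grad eta K s w0 xi S E t \<omega>)))\<^sup>2 \<partial>M)
           + 8 * (\<integral>\<omega>. (norm (grad i (favano_mu n (favano_state M stoch grad eta K s w0 xi S E t \<omega>))))\<^sup>2 \<partial>M)"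
    by (rule lipschitz_local_steps_grad_sq_bound[where X = "\<lambda>\<omega> r. xi (Suc t) i r \<omega>",
          OF smooth[OF i] L_pos eta_pos eta_small K_pos int_h[OF i] xi_sq_int[OF _ i]
          noise_bound int_dev[OF i] int_gmu[OF i] q]) simp_all
qed

end
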